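(* Let $\mathcal{D}_{\text{SEQ}}$ be a temporal sequence database, $\delta$ a minimum confidence threshold, and let $P$ and $P'$ be two temporal patterns. If $P'\subseteq P$ and $\dfrac{\textit{supp}(P')}{\max_{E_k\in P}\textit{supp}(E_k)}\le\delta$, then $\textit{conf}(P)\le\delta$.
   Context: A temporal event is a pair $E=(\omega,T)$ with $\omega$ a symbol and $T$ a set of time intervals; an instance is $e=(\omega,[t_s,t_e])$ with $[t_s,t_e]\in T$, and $E_{\triangleright e}$ denotes that $e$ is an instance of $E$. $\Re=\{\text{Follows},\text{Contains},\text{Overlaps}\}$ is a set of relations on pairs of instances defined by endpoint conditions (buffer $\epsilon>0$, minimal overlap $d_o$, paper's notation $t\pm\epsilon$): Follows iff $t_{e_i}\pm\epsilon\le t_{s_j}$; Contains iff $(t_{s_i}\le t_{s_j})\wedge(t_{e_i}\pm\epsilon\ge t_{e_j})$; Overlaps iff $(t_{s_i}<t_{s_j})\wedge(t_{e_i}\pm\epsilon<t_{e_j})\wedge(t_{e_i}-t_{s_j}\ge d_o\pm\epsilon)$. A temporal pattern is a list of triples $(r_{ij},E_i,E_j)$ with $r_{ij}\in\Re$; $E\in P$ means $E$ occurs in a triple of $P$; $P'\subseteq P$ means $P'$ is a sub-pattern of $P$ (every triple of $P'$ is a triple of $P$). A temporal sequence is a list of instances ordered by start time; $\mathcal{D}_{\text{SEQ}}$ is a finite collection of temporal sequences. $S$ supports $P$ iff $|S|\ge2$ and for every triple $(r_{ij},E_i,E_j)$ of $P$ there exist instances $e_l,e_m$ in $S$ with $r_{ij}$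 holding between $E_{i_{\triangleright e_l}}$ and $E_{j_{\triangleright e_m}}$. $\textit{supp}(P)$ = number of sequences of $\mathcal{D}_{\text{SEQ}}$ supporting $P$; $\textit{supp}(E)$ = number of sequences containing an instance of $E$; $\textit{conf}(P)=\textit{supp}(P)/\max_{E_k\in P}\textit{supp}(E_k)$. *)

theory Defs
  imports Complex_Main
begin

type_synonym interval = "real \<times> real"
type_synonym 'a tevent = "'a \<times> interval set"
type_synonym 'a tinstance = "'a \<times> interval"

definition is_instance_of :: "'a tevent \<Rightarrow> 'a tinstance \<Rightarrow> bool" where
  "is_instance_of E e \<longleftrightarrow> fst e = fst E \<and> snd e \<in> snd E"

datatype trel = Follows | Contains | Overlaps

definition t_s :: "'a tinstance \<Rightarrow> real" where "t_s e = fst (snd e)"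
definition t_e :: "'a tinstance \<Rightarrow> real" where "t_e e = snd (snd e)"

text \<open>Relations between instances with buffer eps > 0 and minimal overlap d_o;
  the paper's tolerance "t \<plusminus> eps" is read as "up to a shift by eps in the
  permissive direction".\<close>
fun rel_holds :: "real \<Rightarrow> real \<Rightarrow> trel \<Rightarrow> 'a tinstance \<Rightarrow> 'a tinstance \<Rightarrow> bool" where
  "rel_holds eps d_o Follows ei ej \<longleftrightarrow> t_e ei - eps \<le> t_s ej"
| "rel_holds eps d_o Contains ei ej \<longleftrightarrow> t_s ei \<le> t_s ej \<and> t_e ei + eps \<ge> t_e ej"
| "rel_holds eps d_o Overlaps ei ej \<longleftrightarrow>
     t_s ei < t_s ej \<and> t_e ei - eps < t_e ej \<and> t_e ei - t_s ej \<ge> d_o - eps"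

type_synonym 'a tpattern = "(trel \<times> 'a tevent \<times> 'a tevent) list"
type_synonym 'a tsequence = "'a tinstance list"
type_synonym 'a tdb = "'a tsequence list"

definition events_of :: "'a tpattern \<Rightarrow> 'a tevent set" where
  "events_of P = {E. \<exists>(r, Ei, Ej) \<in> set P. E = Ei \<or> E = Ej}"

definition subpattern :: "'a tpattern \<Rightarrow> 'a tpattern \<Rightarrow> bool" where
  "subpattern P' P \<longleftrightarrow> set P' \<subseteq> set P"

definition is_tsequence :: "'a tsequence \<Rightarrow> bool" where
  "is_tsequence S \<longleftrightarrow> sorted (map t_s S)"

definition supports :: "real \<Rightarrow> real \<Rightarrow> 'a tsequence \<Rightarrow> 'a tpattern \<Rightarrow> bool" where
  "supports eps d_o S P \<longleftrightarrow> length S \<ge> 2 \<and>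
     (\<forall>(r, Ei, Ej) \<in> set P. \<exists>el \<in> set S. \<exists>em \<in> set S.
        is_instance_of Ei el \<and> is_instance_of Ej em \<and> rel_holds eps d_o r el em)"

definition supp_pat :: "real \<Rightarrow> real \<Rightarrow> 'a tdb \<Rightarrow> 'a tpattern \<Rightarrow> nat" where
  "supp_pat eps d_o D P = length (filter (\<lambda>S. supports eps d_o S P) D)"

definition supp_ev :: "'a tdb \<Rightarrow> 'a tevent \<Rightarrow> nat" where
  "supp_ev D E = length (filter (\<lambda>S. \<exists>e \<in> set S. is_instance_of E e) D)"

definition max_supp_ev :: "'a tdb \<Rightarrow> 'a tpattern \<Rightarrow> nat" where
  "max_supp_ev D P = Max (supp_ev D ` events_of P)"

definition conf :: "real \<Rightarrow> real \<Rightarrow> 'a tdb \<Rightarrow> 'a tpattern \<Rightarrow> real" where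
  "conf eps d_o D P = real (supp_pat eps d_o D P) / real (max_supp_ev D P)"

end

theory Submission
  imports Defs
begin

lemma length_filter_mono:
  assumes "\<And>x. P x \<Longrightarrow> Q x"
  shows "length (filter P xs) \<le> length (filter Q xs)"
  using assms by (induction xs) auto

lemma supports_subpattern:
  assumes "subpattern P' P" and "supports eps d_o S P"
  shows "supports eps d_o S P'"
  using assms unfolding supports_def subpattern_def by blast

lemma supp_pat_antimono:
  assumes "subpattern P' P"
  shows "supp_pat eps d_o D P \<le> supp_pat eps d_o D P'"
  unfolding supp_pat_def
  using supports_subpattern[OF assms] by (rule length_filter_mono)

theorem lemma7:
  fixes D :: "'a tdb" and P P' :: "'a tpattern" and eps d_o \<delta> :: real
  assumes "eps > 0"
    and "\<forall>S \<in> set D. is_tsequence S"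
    and "subpattern P' P"
    and "real (supp_pat eps d_o D P') / real (max_supp_ev D P) \<le> \<delta>"
  shows "conf eps d_o D P \<le> \<delta>"
proof -
  have "conf eps d_o D P \<le> real (supp_pat eps d_o D P') / real (max_supp_ev D P)"
    unfolding conf_def
    using supp_pat_antimono[OF assms(3)] by (simp add: divide_right_mono)
  with assms(4) show ?thesis by linarith
qed

end
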